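(* Let $n\ge 2$, $A_0,\dots,A_{n-1}\in\mathbb{R}$, $A_n=1$, $F(a)=\sum_{k=0}^nA_ka^k$, and let $x(a)$ be a solution of $\mathrm{Op}_n[F]x=0$ on an open interval $I\subset(0,\infty)$ with $\dot x\neq0$ on $I$. Then the metric $$g=\frac{\dot x^2}{a^2}\,da^2+\frac{dy^2}{a}$$ on $I\times\mathbb{R}$ is never of constant curvature. Moreover $g=dX^2+dY^2-dZ^2$ (an embedding in $\mathbb{R}^{2,1}$), where $$X=\frac{y}{\sqrt a},\qquad Y-Z=-\frac1{\sqrt a},\qquad Y+Z=\frac{y^2}{\sqrt a}+2\int\frac{\dot x^2}{\sqrt a}\,da .$$
   Context: A dot denotes $d/da$, $D_a=d/da$, $F^{(m)}=D_a^mF$; Pochhammer symbol $(z)_0=1$, $(z)_s=z(z+1)\cdots(z+s-1)$; $\mathrm{Op}_n[F]=\sum_{s=0}^n\frac{F^{(n-s)}}{(n-s)!}\frac{1}{(1/2)_s}D_a^s$. *)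

theory Defs
  imports "HOL-Analysis.Analysis"
begin

definition polyF :: "nat \<Rightarrow> (nat \<Rightarrow> real) \<Rightarrow> real \<Rightarrow> real" where
  "polyF n A a = (\<Sum>k\<le>n. A k * a ^ k)"

definition OpF :: "nat \<Rightarrow> (real \<Rightarrow> real) \<Rightarrow> (real \<Rightarrow> real) \<Rightarrow> real \<Rightarrow> real" where
  "OpF n F x a = (\<Sum>s=0..n. ((deriv ^^ (n - s)) F a / fact (n - s))
                          * (1 / pochhammer (1/2 :: real) s) * (deriv ^^ s) x a)"

definition pd1 :: "(real \<times> real \<Rightarrow> real) \<Rightarrow> real \<times> real \<Rightarrow> real" where
  "pd1 f p = deriv (\<lambda>t. f (t, snd p)) (fst p)"

definition pd2 :: "(real \<times> real \<Rightarrow> real) \<Rightarrow> real \<times> real \<Rightarrow> real" where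
  "pd2 f p = deriv (\<lambda>t. f (fst p, t)) (snd p)"

definition gauss_curv_orth ::
  "(real \<times> real \<Rightarrow> real) \<Rightarrow> (real \<times> real \<Rightarrow> real) \<Rightarrow> real \<times> real \<Rightarrow> real" where
  "gauss_curv_orth E G p =
     - (1 / (2 * sqrt (E p * G p))) *
       (pd1 (\<lambda>q. pd1 G q / sqrt (E q * G q)) p + pd2 (\<lambda>q. pd2 E q / sqrt (E q * G q)) p)"

end

theory Submission
  imports Defs "HOL-Computational_Algebra.Polynomial"
begin

(* With u = x', the metric u^2/a^2 da^2 + dy^2/a has curvature K = -(u^2 + 2 a u u') / (4 u^4).
   If K = c is constant, then (1/u^2 + 4c)/a is a constant d, so u^2 D = 1 for the linear
   D(a) = d a - 4c, and u' = -d u^3/2. Hence x^(k+1) = (-d)^k (1/2)_k u^(2k+1), and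
   Op_n[F] x = 0 turns into x + u Q / D^(n-1) = 0 for a polynomial Q. Differentiating once, the
   polynomial W = D^n + D Q' - (n - 1/2) d Q vanishes on I, hence identically. But for d \<noteq> 0
   the coefficient of a^n in W is d^n n! / (1/2)_n (an alternating binomial sum), and for d = 0
   its constant term is (-4c)^n (2n + 1). *)

lemma gauss_curv_orth_warped:
  fixes u :: "real \<Rightarrow> real"
  assumes t: "t > 0" and du: "(u has_real_derivative u') (at t)" and ut: "u t \<noteq> 0"
  shows "gauss_curv_orth (\<lambda>(a, y). (u a)\<^sup>2 / a\<^sup>2) (\<lambda>(a, y). 1 / a) (t, y)
           = - ((u t)\<^sup>2 + 2 * t * u t * u') / (4 * (u t)^4)"
proof -
  define E where "E = (\<lambda>(a::real, y::real). (u a)\<^sup>2 / a\<^sup>2)"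
  define G where "G = (\<lambda>(a::real, y::real). 1 / a)"
  define h where "h = (\<lambda>s. - 1 / sqrt (s * (u s)\<^sup>2))"
  define w where "w = t * (u t)\<^sup>2"
  have w: "w > 0"
    using t ut by (simp add: w_def)
  have sqrt_EG: "sqrt (E (s, y') * G (s, y')) = sqrt (s * (u s)\<^sup>2) / s\<^sup>2" if "s > 0" for s y'
  proof -
    have "E (s, y') * G (s, y') = (s * (u s)\<^sup>2) / (s\<^sup>2)\<^sup>2"
      using that by (simp add: E_def G_def field_simps power2_eq_square)
    moreover have "sqrt ((s\<^sup>2)\<^sup>2) = s\<^sup>2"
      by (simp only: real_sqrt_abs) simp
    ultimately show ?thesis
      by (simp only: real_sqrt_divide)
  qed
  have quotient_eq: "pd1 G (s, y') / sqrt (E (s, y') * G (s, y')) = h s" if "s > 0" for s y'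
  proof -
    have "pd1 G (s, y') = - 1 / s\<^sup>2"
      unfolding pd1_def G_def using that
      by (intro DERIV_imp_deriv) (auto intro!: derivative_eq_intros simp: power2_eq_square)
    then show ?thesis
      using that by (cases "u s = 0") (simp_all add: sqrt_EG h_def field_simps)
  qed
  have h_deriv: "(h has_real_derivative ((u t)\<^sup>2 + 2 * t * u t * u') / (2 * w * sqrt w)) (at t)"
  proof -
    have "((\<lambda>s. s * (u s)\<^sup>2) has_real_derivative (u t)\<^sup>2 + 2 * t * u t * u') (at t)"
      by (auto intro!: derivative_eq_intros du)
    from DERIV_chain[OF DERIV_real_sqrt[of "t * (u t)\<^sup>2"] this]
    have "((\<lambda>s. sqrt (s * (u s)\<^sup>2)) has_real_derivative ((u t)\<^sup>2 + 2 * t * u t * u') / (2 * sqrt w)) (at t)"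
      using w by (simp add: o_def w_def field_simps)
    then show ?thesis
      unfolding h_def
      by (rule DERIV_cong[OF DERIV_divide[OF DERIV_const[of "-1"]]])
         (use w t ut in \<open>simp_all add: w_def divide_simps\<close>)
  qed
  have "((\<lambda>s. pd1 G (s, y) / sqrt (E (s, y) * G (s, y))) has_real_derivative
          ((u t)\<^sup>2 + 2 * t * u t * u') / (2 * w * sqrt w)) (at t)"
    by (rule has_field_derivative_transform_within_open[OF h_deriv, of "{0<..}"])
       (use t quotient_eq in auto)
  then have curv_a: "pd1 (\<lambda>q. pd1 G q / sqrt (E q * G q)) (t, y) = ((u t)\<^sup>2 + 2 * t * u t * u') / (2 * w * sqrt w)"
    by (simp add: pd1_def[of "\<lambda>q. pd1 G q / sqrt (E q * G q)"] DERIV_imp_deriv)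
  have curv_y: "pd2 (\<lambda>q. pd2 E q / sqrt (E q * G q)) (t, y) = 0"
    by (simp add: pd2_def E_def)
  have sqrt_EG_t: "sqrt (E (t, y) * G (t, y)) = sqrt w / t\<^sup>2"
    using sqrt_EG[OF t] by (simp add: w_def)
  obtain r where r: "sqrt w = r" "r > 0" "r * r = w"
    using w by force
  have "gauss_curv_orth E G (t, y)
      = - (t\<^sup>2 * ((u t)\<^sup>2 + 2 * t * u t * u')) / (4 * (r * r) * w)"
    unfolding gauss_curv_orth_def curv_a curv_y sqrt_EG_t r(1) using r(2) w t
    by (simp add: field_simps)
  also have "\<dots> = - ((u t)\<^sup>2 + 2 * t * u t * u') / (4 * (u t)^4)"
    unfolding r(3) using w t ut by (simp add: w_def field_simps power2_eq_square eval_nat_numeral)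
  finally show ?thesis
    by (simp add: E_def G_def)
qed

lemma constant_curvature_first_integral:
  fixes u u' :: "real \<Rightarrow> real"
  assumes I: "is_interval I" "I \<subseteq> {0<..}"
    and du: "\<And>t. t \<in> I \<Longrightarrow> (u has_real_derivative u' t) (at t)"
    and u: "\<And>t. t \<in> I \<Longrightarrow> u t \<noteq> 0"
    and K: "\<And>t. t \<in> I \<Longrightarrow> (u t)\<^sup>2 + 2 * t * u t * u' t = - 4 * c * (u t)^4"
  obtains d where "\<And>t. t \<in> I \<Longrightarrow> (u t)\<^sup>2 * (d * t - 4 * c) = 1"
    and "\<And>t. t \<in> I \<Longrightarrow> u' t = - d * (u t)^3 / 2"
proof -
  have t: "t > 0" if "t \<in> I" for t
    using that I by auto
  have u': "u' t = - (u t + 4 * c * (u t)^3) / (2 * t)" if "t \<in> I" for t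
  proof -
    have "u t * (2 * t * u' t) = u t * (- (u t + 4 * c * (u t)^3))"
      using K[OF that] by (simp add: algebra_simps power2_eq_square eval_nat_numeral)
    then have "2 * t * u' t = - (u t + 4 * c * (u t)^3)"
      using u[OF that] by simp
    then show ?thesis
      using u[OF that] t[OF that] by (simp add: field_simps)
  qed
  have "((\<lambda>s. (1 / (u s)\<^sup>2 + 4 * c) / s) has_field_derivative 0) (at t within I)" if "t \<in> I" for t
  proof -
    have "((\<lambda>s. (u s)\<^sup>2) has_real_derivative 2 * u t * u' t) (at t)"
      by (auto intro!: derivative_eq_intros du[OF that])
    from DERIV_divide[OF DERIV_const[of 1] this]
    have "((\<lambda>s. 1 / (u s)\<^sup>2) has_real_derivative - (2 * u t * u' t) / ((u t)\<^sup>2 * (u t)\<^sup>2)) (at t)"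
      using u[OF that] by simp
    from DERIV_divide[OF DERIV_add[OF this DERIV_const[of "4 * c"]] DERIV_ident]
    have "((\<lambda>s. (1 / (u s)\<^sup>2 + 4 * c) / s) has_real_derivative
            ((- (2 * u t * u' t) / ((u t)\<^sup>2 * (u t)\<^sup>2) + 0) * t - (1 / (u t)\<^sup>2 + 4 * c) * 1) / (t * t)) (at t)"
      using t[OF that] by simp
    moreover have "(- (2 * u t * u' t) / ((u t)\<^sup>2 * (u t)\<^sup>2) + 0) * t - (1 / (u t)\<^sup>2 + 4 * c) * 1 = 0"
      using u[OF that] t[OF that] unfolding u'[OF that]
      by (simp add: field_simps power2_eq_square eval_nat_numeral)
    ultimately show ?thesis
      by (simp add: has_field_derivative_at_within)
  qed
  from has_field_derivative_zero_constant[OF is_interval_convex[OF I(1)] this]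
  obtain d where d: "\<And>t. t \<in> I \<Longrightarrow> (1 / (u t)\<^sup>2 + 4 * c) / t = d"
    by blast
  show ?thesis
  proof
    show D: "(u t)\<^sup>2 * (d * t - 4 * c) = 1" if "t \<in> I" for t
      using d[OF that, symmetric] u[OF that] t[OF that] by (simp add: field_simps)
    show "u' t = - d * (u t)^3 / 2" if "t \<in> I" for t
    proof -
      have "u t * ((u t)\<^sup>2 * (d * t - 4 * c)) = u t"
        using D[OF that] by simp
      then have "u t + 4 * c * (u t)^3 = d * t * (u t)^3"
        by (simp add: algebra_simps power2_eq_square power3_eq_cube)
      then show ?thesis
        unfolding u'[OF that] using t[OF that] by (simp add: field_simps)
    qed
  qed
qed

lemma higher_deriv_riccati:
  fixes x u :: "real \<Rightarrow> real"
  assumes I: "open I"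
    and dx: "\<And>t. t \<in> I \<Longrightarrow> (x has_real_derivative u t) (at t)"
    and du: "\<And>t. t \<in> I \<Longrightarrow> (u has_real_derivative - d * (u t)^3 / 2) (at t)"
    and t: "t \<in> I"
  shows "(deriv ^^ Suc k) x t = (-d)^k * pochhammer (1/2) k * (u t)^(2*k+1)"
  using t
proof (induction k arbitrary: t)
  case 0
  then show ?case
    by (simp add: DERIV_imp_deriv dx)
next
  case (Suc k)
  have "\<forall>\<^sub>F s in nhds t. (deriv ^^ Suc k) x s = (-d)^k * pochhammer (1/2) k * (u s)^(2*k+1)"
    using eventually_nhds_in_open[OF I Suc.prems] by eventually_elim (use Suc.IH in blast)
  then have "(deriv ^^ Suc (Suc k)) x t = deriv (\<lambda>s. (-d)^k * pochhammer (1/2) k * (u s)^(2*k+1)) t"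
    by (simp add: deriv_cong_ev)
  also have "\<dots> = (-d)^k * pochhammer (1/2) k * (of_nat (2*k+1) * ((- d * (u t)^3 / 2) * (u t)^(2*k)))"
    by (intro DERIV_imp_deriv DERIV_cmult DERIV_cong[OF DERIV_power[OF du[OF Suc.prems]]]) simp
  also have "\<dots> = (-d)^(Suc k) * pochhammer (1/2) (Suc k) * (u t)^(2*(Suc k)+1)"
    by (simp add: pochhammer_Suc power_add eval_nat_numeral field_simps)
  finally show ?case .
qed

lemma pochhammer_neq_0:
  fixes c :: real
  assumes "\<forall>j<k. real j + c \<noteq> 0"
  shows "pochhammer c k \<noteq> 0"
  using assms by (auto simp: pochhammer_eq_0_iff)

lemma pochhammer_half_neq_0: "pochhammer (1/2 :: real) k \<noteq> 0"
  by (rule pochhammer_neq_0) (auto simp: add_pos_nonneg)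

lemma alternating_binomial_reciprocal_sum:
  fixes c :: real
  assumes "\<forall>j\<le>n. real j + c \<noteq> 0"
  shows "(\<Sum>j\<le>n. (-1)^j * real (n choose j) / (real j + c)) = fact n / pochhammer c (Suc n)"
  using assms
proof (induction n arbitrary: c)
  case 0
  then show ?case by simp
next
  case (Suc n)
  let ?S = "\<lambda>m c. \<Sum>j\<le>m. (-1)^j * real (m choose j) / (real j + c)"
  have shifted: "\<forall>j\<le>n. real j + (c+1) \<noteq> 0"
    using Suc.prems by (metis Suc_le_mono add.assoc add.commute of_nat_Suc)
  then have IH: "?S n c = fact n / pochhammer c (Suc n)" "?S n (c+1) = fact n / pochhammer (c+1) (Suc n)"
    using Suc.IH Suc.prems by auto
  have c0: "c \<noteq> 0" and cn: "c + real (Suc n) \<noteq> 0"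
    using Suc.prems by (auto dest: spec[of _ 0] spec[of _ "Suc n"])
  have "?S (Suc n) c = 1/c + (\<Sum>i\<le>n. (-1)^(Suc i) * real (n choose i) / (real i + (c+1)))
           + (\<Sum>i\<le>n. (-1)^(Suc i) * real (n choose Suc i) / (real (Suc i) + c))"
    by (subst sum.atMost_Suc_shift) (simp add: sum.distrib[symmetric] diff_divide_distrib algebra_simps)
  also have "(\<Sum>i\<le>n. (-1)^(Suc i) * real (n choose Suc i) / (real (Suc i) + c))
      = (\<Sum>j\<le>Suc n. (-1)^j * real (n choose j) / (real j + c)) - 1/c"
    by (subst sum.atMost_Suc_shift) simp
  also have "(\<Sum>j\<le>Suc n. (-1)^j * real (n choose j) / (real j + c)) = ?S n c"
    by simp
  also have "(\<Sum>i\<le>n. (-1)^(Suc i) * real (n choose i) / (real i + (c+1))) = - ?S n (c+1)"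
    by (simp add: sum_negf)
  finally have "?S (Suc n) c = fact n / pochhammer c (Suc n) - fact n / pochhammer (c+1) (Suc n)"
    using IH by simp
  also have "\<dots> = fact (Suc n) / pochhammer c (Suc (Suc n))"
  proof -
    have P: "pochhammer c (Suc n) \<noteq> 0" and Q: "pochhammer (c+1) (Suc n) \<noteq> 0"
      using Suc.prems shifted by (auto intro!: pochhammer_neq_0)
    have "fact n / pochhammer c (Suc n) = fact n * (c + real (Suc n)) / pochhammer c (Suc (Suc n))"
      unfolding pochhammer_Suc[of c "Suc n"] using P cn by (simp add: divide_simps)
    moreover have "fact n / pochhammer (c+1) (Suc n) = fact n * c / pochhammer c (Suc (Suc n))"
      unfolding pochhammer_rec[of c "Suc n"] using Q c0 by (simp add: field_simps)
    ultimately show ?thesis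
      by (simp add: diff_divide_distrib[symmetric] algebra_simps)
  qed
  finally show ?case .
qed

lemma alternating_binomial_sum_half:
  "1 + (\<Sum>s=1..n. (-1)^(s-1) * real (n choose s) / (real s - 1/2)) / 2 = fact n / pochhammer (1/2) n"
proof -
  define S where "S = (\<Sum>s=1..n. (-1)^(s-1) * real (n choose s) / (real s - 1/2))"
  have "fact n / pochhammer (-1/2) (Suc n) = (\<Sum>j\<le>n. (-1)^j * real (n choose j) / (real j + (-1/2)))"
    by (rule alternating_binomial_reciprocal_sum[symmetric], intro allI impI, rename_tac j, case_tac j) auto
  also have "\<dots> = -2 + (\<Sum>s=1..n. (-1)^s * real (n choose s) / (real s + (-1/2)))"
    by (simp add: atMost_atLeast0 sum.atLeast_Suc_atMost)
  also have "(\<Sum>s=1..n. (-1)^s * real (n choose s) / (real s + (-1/2))) = - S"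
    unfolding S_def by (subst sum_negf[symmetric], rule sum.cong) (auto simp: power_eq_if)
  finally have "fact n / pochhammer (-1/2) (Suc n) = -2 - S"
    by simp
  moreover have "pochhammer (-1/2::real) (Suc n) = (-1/2) * pochhammer (1/2) n"
    by (simp add: pochhammer_rec)
  ultimately have "fact n / ((-1/2) * pochhammer (1/2) n) = -2 - S"
    by simp
  then have "fact n = (1 + S/2) * pochhammer (1/2) n"
    using pochhammer_half_neq_0[of n] by (simp add: field_simps)
  then show ?thesis
    using pochhammer_half_neq_0[of n] unfolding S_def[symmetric] by (simp add: field_simps)
qed

lemma higher_deriv_poly: "(deriv ^^ m) (poly p) = poly ((pderiv ^^ m) (p :: real poly))"
proof (induction m)
  case (Suc m)
  then show ?case
    by (auto intro!: DERIV_imp_deriv)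
qed simp

lemma fact_add_pochhammer: "fact (s + k) = fact s * pochhammer (of_nat (Suc s) :: real) k"
  unfolding pochhammer_fact pochhammer_product' by (simp add: add.commute[of 1])

definition Fpoly :: "nat \<Rightarrow> (nat \<Rightarrow> real) \<Rightarrow> real poly" where
  "Fpoly n A = (\<Sum>k\<le>n. monom (A k) k)"

lemma polyF_eq_poly_Fpoly: "polyF n A = poly (Fpoly n A)"
  by (auto simp: polyF_def Fpoly_def poly_sum poly_monom)

lemma coeff_Fpoly: "coeff (Fpoly n A) i = (if i \<le> n then A i else 0)"
  by (simp add: Fpoly_def coeff_sum coeff_monom)

lemma degree_Fpoly_le: "degree (Fpoly n A) \<le> n"
  by (rule degree_le) (simp add: coeff_Fpoly)

lemma degree_Fpoly: "A n = 1 \<Longrightarrow> degree (Fpoly n A) = n"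
  by (intro antisym degree_Fpoly_le le_degree) (simp add: coeff_Fpoly)

lemma coeff_higher_pderiv_Fpoly:
  assumes "A n = 1" "s \<le> n"
  shows "coeff ((pderiv ^^ (n - s)) (Fpoly n A)) s = fact n / fact s"
  using assms fact_add_pochhammer[of s "n - s"] by (simp add: coeff_higher_pderiv coeff_Fpoly)

lemma poly_higher_pderiv_Fpoly_top: "A n = 1 \<Longrightarrow> poly ((pderiv ^^ n) (Fpoly n A)) t = fact n"
  using coeff_higher_pderiv_Fpoly[of A n 0]
  by (subst degree_0_id[symmetric]) (auto simp: degree_higher_pderiv degree_Fpoly)

(* Once u^2 D = 1 and x^(s) = (-d)^(s-1) (1/2)_(s-1) u^(2s-1), the operator reduces to
   Op_n[F] x = x + u Q / D^(n-1) (OpF_reduced), whose derivative is u W / D^n. *)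
definition Dpoly :: "real \<Rightarrow> real \<Rightarrow> real poly" where
  "Dpoly c d = [:-4*c, d:]"

definition Qpoly :: "nat \<Rightarrow> (nat \<Rightarrow> real) \<Rightarrow> real \<Rightarrow> real \<Rightarrow> real poly" where
  "Qpoly n A c d = (\<Sum>s=1..n. smult ((-1)^(s-1) / (real s - 1/2) * d^(s-1) / fact (n-s))
                    ((pderiv ^^ (n-s)) (Fpoly n A) * Dpoly c d ^ (n-s)))"

definition Wpoly :: "nat \<Rightarrow> (nat \<Rightarrow> real) \<Rightarrow> real \<Rightarrow> real \<Rightarrow> real poly" where
  "Wpoly n A c d = Dpoly c d ^ n + Dpoly c d * pderiv (Qpoly n A c d)
                   - smult ((real n - 1/2) * d) (Qpoly n A c d)"

lemma OpF_reduced: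
  assumes An: "A n = 1"
    and derivs: "\<And>k. (deriv ^^ Suc k) x t = (-d)^k * pochhammer (1/2) k * (u t)^(2*k+1)"
    and uD: "(u t)\<^sup>2 * poly (Dpoly c d) t = 1"
  shows "OpF n (polyF n A) x t = x t + u t * poly (Qpoly n A c d) t / poly (Dpoly c d) t ^ (n-1)"
proof -
  define D where "D = poly (Dpoly c d) t"
  define P where "P = (\<lambda>s. poly ((pderiv ^^ (n-s)) (Fpoly n A)) t)"
  have D: "D \<noteq> 0"
    using uD by (auto simp: D_def)
  have "OpF n (polyF n A) x t = (\<Sum>s=0..n. P s / fact (n-s) * (1 / pochhammer (1/2) s) * (deriv ^^ s) x t)"
    by (simp add: OpF_def polyF_eq_poly_Fpoly higher_deriv_poly P_def)
  also have "\<dots> = x t + (\<Sum>s=1..n. P s / fact (n-s) * (1 / pochhammer (1/2) s) * (deriv ^^ s) x t)"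
    using poly_higher_pderiv_Fpoly_top[of A n, OF An] by (simp add: sum.atLeast_Suc_atMost P_def)
  also have "(\<Sum>s=1..n. P s / fact (n-s) * (1 / pochhammer (1/2) s) * (deriv ^^ s) x t)
     = (\<Sum>s=1..n. u t * ((-1)^(s-1) / (real s - 1/2) * d^(s-1) / fact (n-s)) * (P s * D^(n-s)) / D^(n-1))"
  proof (rule sum.cong[OF refl])
    fix s assume s: "s \<in> {1..n}"
    define j where "j = s - 1"
    have s_j: "s = Suc j"
      using s by (simp add: j_def)
    have "((u t)\<^sup>2)^j * D^j = 1"
      using uD by (simp add: D_def flip: power_mult_distrib)
    then have "((u t)\<^sup>2)^j = 1 / D^j"
      using D by (simp add: field_simps)
    then have ds: "(deriv ^^ s) x t = (-1)^j * d^j * pochhammer (1/2) j * (u t / D^j)"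
      using derivs[of j] by (simp only: s_j power_add power_mult power_minus[of d]) simp
    define q where "q = real j + 1/2"
    have q: "q \<noteq> 0"
      by (simp add: q_def add_pos_nonneg)
    have ps: "pochhammer (1/2) s = pochhammer (1/2) j * q"
      by (simp add: q_def s_j pochhammer_Suc)
    have rs: "real s - 1/2 = q" and sj: "s - 1 = j"
      by (simp_all add: q_def s_j)
    have Dn: "D^(n-1) = D^(n-s) * D^j"
      using s by (simp add: s_j flip: power_add)
    show "P s / fact (n-s) * (1 / pochhammer (1/2) s) * (deriv ^^ s) x t
       = u t * ((-1)^(s-1) / (real s - 1/2) * d^(s-1) / fact (n-s)) * (P s * D^(n-s)) / D^(n-1)"
      unfolding ds ps rs sj Dn using D q pochhammer_half_neq_0[of j] by (simp add: field_simps)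
  qed
  also have "\<dots> = u t * poly (Qpoly n A c d) t / D^(n-1)"
    by (simp add: Qpoly_def poly_sum D_def P_def sum_divide_distrib sum_distrib_left mult.assoc)
  finally show ?thesis
    by (simp add: D_def)
qed

lemma Wpoly_root:
  fixes x u :: "real \<Rightarrow> real"
  assumes n: "n \<ge> 2" and I: "open I" "a \<in> I"
    and dx: "\<And>t. t \<in> I \<Longrightarrow> (x has_real_derivative u t) (at t)"
    and du: "\<And>t. t \<in> I \<Longrightarrow> (u has_real_derivative - d * (u t)^3 / 2) (at t)"
    and uD: "\<And>t. t \<in> I \<Longrightarrow> (u t)\<^sup>2 * poly (Dpoly c d) t = 1"
    and sol: "\<And>t. t \<in> I \<Longrightarrow> x t + u t * poly (Qpoly n A c d) t / poly (Dpoly c d) t ^ (n-1) = 0"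
  shows "poly (Wpoly n A c d) a = 0"
proof -
  obtain k where k: "n = Suc (Suc k)"
    using n by (metis add_2_eq_Suc le_Suc_ex)
  define Q where "Q = poly (Qpoly n A c d)"
  define Q' where "Q' = poly (pderiv (Qpoly n A c d))"
  define D where "D = poly (Dpoly c d)"
  have D: "D a \<noteq> 0" and u: "u a \<noteq> 0"
    using uD[OF I(2)] by (auto simp: D_def)
  have dD: "(D has_real_derivative d) (at a)"
    unfolding D_def by (rule DERIV_cong[OF poly_DERIV]) (simp add: Dpoly_def pderiv_pCons)
  define V where "V = u a + ((- d * (u a)^3 / 2 * Q a + Q' a * u a) * D a ^ Suc k
                 - u a * Q a * (real (Suc k) * (d * D a ^ k))) / (D a ^ Suc k * D a ^ Suc k)"
  have "((\<lambda>s. x s + u s * Q s / D s ^ Suc k) has_real_derivative V) (at a)"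
    unfolding V_def Q_def Q'_def using D
    by (intro DERIV_cong[OF DERIV_add[OF dx[OF I(2)]
          DERIV_divide[OF DERIV_mult[OF du[OF I(2)] poly_DERIV] DERIV_power[OF dD]]]]) simp_all
  moreover have "((\<lambda>s. x s + u s * Q s / D s ^ Suc k) has_real_derivative 0) (at a)"
    using sol k by (intro has_field_derivative_transform_within_open[OF DERIV_const I]) (simp add: Q_def D_def)
  ultimately have "V = 0"
    by (rule DERIV_unique)
  have u3: "(u a)^3 = u a / D a"
    using uD[OF I(2)] D by (simp add: D_def power3_eq_cube power2_eq_square field_simps)
  obtain Dk where Dk: "D a ^ k = Dk"
    by blast
  have "D a ^ n = D a * D a * Dk" "real n = real k + 2"
    using k Dk by simp_all
  then have W: "poly (Wpoly n A c d) a = D a * D a * Dk + D a * Q' a - (real k + 3/2) * d * Q a"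
    by (simp add: Wpoly_def Q_def Q'_def D_def)
  have "Dk \<noteq> 0"
    using D Dk by auto
  moreover have "u a * poly (Wpoly n A c d) a / (D a * D a * Dk) = V"
    using D \<open>Dk \<noteq> 0\<close> unfolding W u3 V_def by (simp add: Dk field_simps)
  ultimately show ?thesis
    using D u \<open>V = 0\<close> by simp
qed

lemma degree_Qpoly_le: "degree (Qpoly n A c d) \<le> n"
  unfolding Qpoly_def
proof (intro degree_sum_le finite_atLeastAtMost degree_smult_le[THEN order.trans])
  fix s assume s: "s \<in> {1..n}"
  have "degree ((pderiv ^^ (n-s)) (Fpoly n A)) \<le> s"
    using degree_Fpoly_le[of n A] s by (simp add: degree_higher_pderiv)
  moreover have "degree (Dpoly c d ^ (n-s)) \<le> n - s"
    by (rule order.trans[OF degree_power_le]) (simp add: Dpoly_def)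
  ultimately show "degree ((pderiv ^^ (n-s)) (Fpoly n A) * Dpoly c d ^ (n-s)) \<le> n"
    using s by (intro order.trans[OF degree_mult_le]) auto
qed

lemma coeff_Qpoly_top:
  assumes "A n = 1" "d \<noteq> 0"
  shows "coeff (Qpoly n A c d) n = d^(n-1) * (\<Sum>s=1..n. (-1)^(s-1) * real (n choose s) / (real s - 1/2))"
proof -
  have lead: "coeff ((pderiv ^^ (n-s)) (Fpoly n A) * Dpoly c d ^ (n-s)) n = fact n / fact s * d^(n-s)"
    if s: "s \<in> {1..n}" for s
  proof -
    have d1: "degree ((pderiv ^^ (n-s)) (Fpoly n A)) = s"
      using s assms by (simp add: degree_higher_pderiv degree_Fpoly)
    have d2: "degree (Dpoly c d ^ (n-s)) = n - s"
      using assms by (simp add: degree_power_eq Dpoly_def)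
    have "coeff (Dpoly c d ^ (n-s)) (n-s) = d^(n-s)"
      using lead_coeff_power[of "Dpoly c d" "n-s"] d2 assms by (simp add: Dpoly_def)
    then show ?thesis
      using coeff_mult_degree_sum[of "(pderiv ^^ (n-s)) (Fpoly n A)" "Dpoly c d ^ (n-s)"] d1 d2 s assms
      by (simp add: coeff_higher_pderiv_Fpoly)
  qed
  have "coeff (Qpoly n A c d) n
      = (\<Sum>s=1..n. (-1)^(s-1) / (real s - 1/2) * d^(s-1) / fact (n-s) * (fact n / fact s * d^(n-s)))"
    by (simp add: Qpoly_def coeff_sum lead)
  also have "\<dots> = (\<Sum>s=1..n. d^(n-1) * ((-1)^(s-1) * real (n choose s) / (real s - 1/2)))"
  proof (rule sum.cong)
    fix s assume s: "s \<in> {1..n}"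
    have "d^(n-1) = d^(s-1) * d^(n-s)"
      using s by (simp add: power_add[symmetric])
    moreover have "fact n = fact s * fact (n-s) * real (n choose s)"
      using s by (simp add: binomial_fact)
    moreover have "real s - 1/2 \<noteq> 0"
      using s by simp
    ultimately show "(-1)^(s-1) / (real s - 1/2) * d^(s-1) / fact (n-s) * (fact n / fact s * d^(n-s))
       = d^(n-1) * ((-1)^(s-1) * real (n choose s) / (real s - 1/2))"
      by (simp add: field_simps)
  qed simp
  finally show ?thesis
    by (simp add: sum_distrib_left)
qed

lemma coeff_Qpoly_1_linear:
  assumes "A n = 1" "n \<ge> 1"
  shows "coeff (Qpoly n A c 0) 1 = 2 * real n * (-4*c)^(n-1)"
proof -
  have "coeff ((pderiv ^^ (n-1)) (Fpoly n A)) 1 = fact n"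
    using coeff_higher_pderiv_Fpoly[of A n 1] assms by simp
  then have top: "coeff ((pderiv ^^ (n-1)) (Fpoly n A) * Dpoly c 0 ^ (n-1)) 1 = (-4*c)^(n-1) * fact n"
    by (simp add: Dpoly_def monom_power mult.commute[of _ "monom _ _"] coeff_monom_mult flip: monom_0)
  have "coeff (Qpoly n A c 0) 1 = (\<Sum>s=1..n. (-1)^(s-1) / (real s - 1/2) * 0^(s-1) / fact (n-s)
                   * coeff ((pderiv ^^ (n-s)) (Fpoly n A) * Dpoly c 0 ^ (n-s)) 1)"
    by (simp add: Qpoly_def coeff_sum)
  also have "\<dots> = 2 / fact (n-1) * coeff ((pderiv ^^ (n-1)) (Fpoly n A) * Dpoly c 0 ^ (n-1)) 1"
    using assms by (subst sum.atLeast_Suc_atMost) (auto intro!: sum.neutral)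
  also have "\<dots> = 2 * real n * (-4*c)^(n-1)"
    using assms by (simp only: top) (simp add: fact_reduce[of n] field_simps)
  finally show ?thesis .
qed

lemma Wpoly_neq_0:
  assumes "A n = 1" "n \<ge> 1" "c \<noteq> 0 \<or> d \<noteq> 0"
  shows "Wpoly n A c d \<noteq> 0"
proof (cases "d = 0")
  case False
  define S where "S = (\<Sum>s=1..n. (-1)^(s-1) * real (n choose s) / (real s - 1/2))"
  have Q: "coeff (Qpoly n A c d) n = d^(n-1) * S"
    using coeff_Qpoly_top[of A n d c] assms False by (simp add: S_def)
  have "coeff (Qpoly n A c d) (Suc n) = 0"
    using degree_Qpoly_le by (intro coeff_eq_0) (simp add: le_imp_less_Suc)
  then have "coeff (Dpoly c d * pderiv (Qpoly n A c d)) n = d * real n * coeff (Qpoly n A c d) n"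
    using assms by (cases n) (simp_all add: Dpoly_def coeff_pderiv)
  moreover have "coeff (Dpoly c d ^ n) n = d^n"
    using lead_coeff_power[of "Dpoly c d" n] False by (simp add: Dpoly_def degree_power_eq)
  ultimately have "coeff (Wpoly n A c d) n = d^n + d * real n * (d^(n-1) * S) - (real n - 1/2) * d * (d^(n-1) * S)"
    by (simp add: Wpoly_def Q)
  also have "\<dots> = d^n * (1 + S/2)"
    using assms by (cases n) (simp_all add: field_simps)
  also have "\<dots> = d^n * (fact n / pochhammer (1/2) n)"
    by (simp only: S_def alternating_binomial_sum_half)
  finally have "coeff (Wpoly n A c d) n \<noteq> 0"
    using False pochhammer_half_neq_0[of n] by simp
  then show ?thesis
    by auto
next
  case True
  have "coeff (Wpoly n A c 0) 0 = (-4*c)^n + (-4*c) * coeff (Qpoly n A c 0) 1"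
    by (simp add: Wpoly_def Dpoly_def coeff_0_power coeff_mult_0 coeff_pderiv)
  also have "\<dots> = (-4*c)^n * (1 + 2 * real n)"
    by (simp only: coeff_Qpoly_1_linear[of A n, OF assms(1,2)]) (cases n, simp_all add: field_simps)
  finally have "coeff (Wpoly n A c d) 0 \<noteq> 0"
    using assms True by simp
  then show ?thesis
    by auto
qed

lemma gauss_curv_orth_not_constant:
  fixes x :: "real \<Rightarrow> real"
  assumes n: "n \<ge> 2" and An: "A n = 1"
    and I: "open I" "is_interval I" "I \<noteq> {}" "I \<subseteq> {0<..}"
    and dx: "\<And>t. t \<in> I \<Longrightarrow> x differentiable (at t)"
    and ddx: "\<And>t. t \<in> I \<Longrightarrow> deriv x differentiable (at t)"
    and sol: "\<And>t. t \<in> I \<Longrightarrow> OpF n (polyF n A) x t = 0"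
    and xdot: "\<And>t. t \<in> I \<Longrightarrow> deriv x t \<noteq> 0"
  shows "\<not> (\<exists>c. \<forall>p \<in> I \<times> UNIV. gauss_curv_orth (\<lambda>(a, y). (deriv x a)\<^sup>2 / a\<^sup>2) (\<lambda>(a, y). 1 / a) p = c)"
proof
  assume "\<exists>c. \<forall>p \<in> I \<times> UNIV. gauss_curv_orth (\<lambda>(a, y). (deriv x a)\<^sup>2 / a\<^sup>2) (\<lambda>(a, y). 1 / a) p = c"
  then obtain c where K: "\<And>t. t \<in> I \<Longrightarrow> gauss_curv_orth (\<lambda>(a, y). (deriv x a)\<^sup>2 / a\<^sup>2) (\<lambda>(a, y). 1 / a) (t, 0) = c"
    by blast
  define u where "u = deriv x"
  have t: "t > 0" if "t \<in> I" for t
    using that I(4) by auto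
  have unz: "u t \<noteq> 0" if "t \<in> I" for t
    using xdot[OF that] by (simp add: u_def)
  have x': "(x has_real_derivative u t) (at t)" and u': "(u has_real_derivative deriv u t) (at t)"
    if "t \<in> I" for t
    using dx[OF that] ddx[OF that] by (simp_all add: u_def DERIV_deriv_iff_real_differentiable)
  have "(u t)\<^sup>2 + 2 * t * u t * deriv u t = - 4 * c * (u t)^4" if "t \<in> I" for t
  proof -
    have "- ((u t)\<^sup>2 + 2 * t * u t * deriv u t) / (4 * (u t)^4) = c"
      using K[OF that] gauss_curv_orth_warped[OF t[OF that] u'[OF that] unz[OF that], of 0]
      by (simp add: u_def)
    then show ?thesis
      using unz[OF that] by (simp add: field_simps)
  qed
  then obtain d where uD: "\<And>t. t \<in> I \<Longrightarrow> (u t)\<^sup>2 * (d * t - 4 * c) = 1"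
    and riccati: "\<And>t. t \<in> I \<Longrightarrow> deriv u t = - d * (u t)^3 / 2"
    using constant_curvature_first_integral[OF I(2,4) u' unz] by blast
  have D: "(u t)\<^sup>2 * poly (Dpoly c d) t = 1" if "t \<in> I" for t
    using uD[OF that] by (simp add: Dpoly_def algebra_simps)
  have u'': "(u has_real_derivative - d * (u t)^3 / 2) (at t)" if "t \<in> I" for t
    using u'[OF that] riccati[OF that] by simp
  have "x t + u t * poly (Qpoly n A c d) t / poly (Dpoly c d) t ^ (n-1) = 0" if "t \<in> I" for t
    using sol[OF that] OpF_reduced[of A n x t d u c, OF An higher_deriv_riccati[OF I(1) x' u'' that] D[OF that]]
    by simp
  then have "I \<subseteq> {t. poly (Wpoly n A c d) t = 0}"
    using Wpoly_root[OF n I(1) _ x' u'' D] by blast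
  moreover obtain t0 where "t0 \<in> I"
    using I(3) by blast
  then have "c \<noteq> 0 \<or> d \<noteq> 0"
    using D by (force simp: Dpoly_def)
  then have "Wpoly n A c d \<noteq> 0"
    using Wpoly_neq_0[of A n c d] An n by simp
  ultimately have "finite I"
    using finite_subset poly_roots_finite by blast
  then show False
    using I(1,3) finite_imp_not_open by blast
qed

lemma minkowski_embedding_at:
  fixes \<Phi> :: "real \<Rightarrow> real"
  assumes a: "a > 0" and \<Phi>: "(\<Phi> has_real_derivative v\<^sup>2 / sqrt a) (at a)"
  shows "let X = (\<lambda>(a, y). y / sqrt a);
             YmZ = (\<lambda>(a, y). - 1 / sqrt a);
             YpZ = (\<lambda>(a, y). y\<^sup>2 / sqrt a + 2 * \<Phi> a);
             Y = (\<lambda>p. (YpZ p + YmZ p) / 2);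
             Z = (\<lambda>p. (YpZ p - YmZ p) / 2)
         in \<exists>DX DY DZ.
              (X has_derivative DX) (at (a, y)) \<and> (Y has_derivative DY) (at (a, y)) \<and>
              (Z has_derivative DZ) (at (a, y)) \<and>
              (\<forall>h. (DX h)\<^sup>2 + (DY h)\<^sup>2 - (DZ h)\<^sup>2 = v\<^sup>2 / a\<^sup>2 * (fst h)\<^sup>2 + (snd h)\<^sup>2 / a)"
proof -
  define s where "s = sqrt a"
  have s: "s > 0" "s * s = a"
    using a by (simp_all add: s_def)
  define DX where "DX = (\<lambda>h::real \<times> real. snd h / s - y * fst h / (2 * a * s))"
  define DM where "DM = (\<lambda>h::real \<times> real. fst h / (2 * a * s))"
  define DP where "DP = (\<lambda>h::real \<times> real. 2 * y * snd h / s - y\<^sup>2 * fst h / (2 * a * s) + 2 * (v\<^sup>2 / s * fst h))"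
  have X: "((\<lambda>p. snd p / sqrt (fst p)) has_derivative DX) (at (a, y))"
    unfolding DX_def
    using a s by (auto intro!: derivative_eq_intros simp: s_def field_simps)
  have M: "((\<lambda>p. - 1 / sqrt (fst p)) has_derivative DM) (at (a, y))"
    unfolding DM_def
    using a s by (auto intro!: derivative_eq_intros simp: s_def field_simps)
  have P: "((\<lambda>p. (snd p)\<^sup>2 / sqrt (fst p) + 2 * \<Phi> (fst p)) has_derivative DP) (at (a, y))"
  proof -
    have "(fst has_derivative fst) (at (a, y))"
      by (rule bounded_linear_imp_has_derivative[OF bounded_linear_fst])
    moreover have "(\<Phi> has_derivative (*) (v\<^sup>2 / s)) (at (fst (a, y)))"
      using \<Phi> by (simp add: s_def has_field_derivative_def)
    ultimately have "((\<lambda>p. \<Phi> (fst p)) has_derivative (\<lambda>h. v\<^sup>2 / s * fst h)) (at (a, y))"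
      by (rule has_derivative_compose)
    moreover have "sqrt a * (sqrt a * z) = a * z" for z
      using a by (simp flip: mult.assoc)
    ultimately show ?thesis
      unfolding DP_def using a s by (auto intro!: derivative_eq_intros simp: s_def field_simps power2_eq_square)
  qed
  have metric: "(DX h)\<^sup>2 + ((DP h + DM h) / 2)\<^sup>2 - ((DP h - DM h) / 2)\<^sup>2 = v\<^sup>2 / a\<^sup>2 * (fst h)\<^sup>2 + (snd h)\<^sup>2 / a" for h
    unfolding DX_def DM_def DP_def s(2)[symmetric] using s(1) by (simp add: field_simps power2_eq_square)
  have "((\<lambda>p. ((snd p)\<^sup>2 / sqrt (fst p) + 2 * \<Phi> (fst p) + - 1 / sqrt (fst p)) / 2)
          has_derivative (\<lambda>h. (DP h + DM h) / 2)) (at (a, y))"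
    using has_derivative_mult_right[OF has_derivative_add[OF P M], of "1/2"] by simp
  moreover have "((\<lambda>p. ((snd p)\<^sup>2 / sqrt (fst p) + 2 * \<Phi> (fst p) - - 1 / sqrt (fst p)) / 2)
          has_derivative (\<lambda>h. (DP h - DM h) / 2)) (at (a, y))"
    using has_derivative_mult_right[OF has_derivative_diff[OF P M], of "1/2"] by simp
  ultimately show ?thesis
    unfolding Let_def case_prod_unfold using X metric by blast
qed

lemma minkowski_embedding:
  fixes \<Phi> v :: "real \<Rightarrow> real"
  assumes S: "S \<subseteq> {0<..}" and \<Phi>: "\<forall>a\<in>S. (\<Phi> has_real_derivative (v a)\<^sup>2 / sqrt a) (at a)"
  shows "let X = (\<lambda>(a, y). y / sqrt a);
             YmZ = (\<lambda>(a, y). - 1 / sqrt a);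
             YpZ = (\<lambda>(a, y). y\<^sup>2 / sqrt a + 2 * \<Phi> a);
             Y = (\<lambda>p. (YpZ p + YmZ p) / 2);
             Z = (\<lambda>p. (YpZ p - YmZ p) / 2)
         in \<forall>p \<in> S \<times> UNIV. \<exists>DX DY DZ.
              (X has_derivative DX) (at p) \<and> (Y has_derivative DY) (at p) \<and>
              (Z has_derivative DZ) (at p) \<and>
              (\<forall>h. (DX h)\<^sup>2 + (DY h)\<^sup>2 - (DZ h)\<^sup>2
                    = (v (fst p))\<^sup>2 / (fst p)\<^sup>2 * (fst h)\<^sup>2 + (snd h)\<^sup>2 / fst p)"
  using minkowski_embedding_at[unfolded Let_def] S \<Phi> unfolding Let_def
  by (intro ballI, clarify) (simp add: subset_iff)

theorem proposition7:
  fixes n :: nat and A :: "nat \<Rightarrow> real" and x :: "real \<Rightarrow> real" and I :: "real set"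
  assumes n2: "n \<ge> 2"
    and An: "A n = 1"
    and I_open: "open I" and I_int: "is_interval I" and I_ne: "I \<noteq> {}"
    and I_pos: "I \<subseteq> {0<..}"
    and x_diff: "\<forall>k<n. \<forall>t\<in>I. ((deriv ^^ k) x) differentiable (at t)"
    and x_sol: "\<forall>a\<in>I. OpF n (polyF n A) x a = 0"
    and xdot_nz: "\<forall>a\<in>I. deriv x a \<noteq> 0"
  shows "\<not> (\<exists>c. \<forall>p \<in> I \<times> UNIV.
             gauss_curv_orth (\<lambda>(a, y). (deriv x a)\<^sup>2 / a\<^sup>2) (\<lambda>(a, y). 1 / a) p = c)
       \<and> (\<forall>\<Phi>. (\<forall>a\<in>I. (\<Phi> has_real_derivative (deriv x a)\<^sup>2 / sqrt a) (at a)) \<longrightarrow>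
            (let X = (\<lambda>(a, y). y / sqrt a);
                 YmZ = (\<lambda>(a, y). - 1 / sqrt a);
                 YpZ = (\<lambda>(a, y). y\<^sup>2 / sqrt a + 2 * \<Phi> a);
                 Y = (\<lambda>p. (YpZ p + YmZ p) / 2);
                 Z = (\<lambda>p. (YpZ p - YmZ p) / 2)
             in \<forall>p \<in> I \<times> UNIV. \<exists>DX DY DZ.
                  (X has_derivative DX) (at p) \<and> (Y has_derivative DY) (at p) \<and>
                  (Z has_derivative DZ) (at p) \<and>
                  (\<forall>h. (DX h)\<^sup>2 + (DY h)\<^sup>2 - (DZ h)\<^sup>2
                        = (deriv x (fst p))\<^sup>2 / (fst p)\<^sup>2 * (fst h)\<^sup>2 + (snd h)\<^sup>2 / fst p)))"
proof -
  have "x differentiable (at t)" "deriv x differentiable (at t)" if "t \<in> I" for t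
    using x_diff[rule_format, of 0 t] x_diff[rule_format, of 1 t] that n2 by simp_all
  then show ?thesis
    using x_sol xdot_nz
    by (intro conjI allI impI minkowski_embedding[OF I_pos]
          gauss_curv_orth_not_constant[where x = x and n = n and A = A and I = I,
            OF n2 An I_open I_int I_ne I_pos]) auto
qed

end
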